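(* Let $G$ be generated by the random planted model with $p\ge(10\ln n)/\sqrt k$. Then with high probability over the input, $S$ is the unique set of $k$ vertices of $G$ whose induced subgraph is bipartite.
   Context: Random planted model with parameters $n,k,d,p$: $V$ has $n$ vertices, $S\subset V$ with $|S|=k$, the graph induced on $S$ is an arbitrary connected $d$-regular bipartite graph with parts $S_1,S_2$, and each pair in $S\times(V\setminus S)$ and in $(V\setminus S)\times(V\setminus S)$ is an edge independently with probability $p$. *)

theory Defs
  imports "HOL-Probability.Probability"
begin

text \<open>Vertices are {0..<n}. Unordered pairs {u,v} are encoded as (u,v) with u < v.
  The random pairs are those not lying inside S.\<close>

definition rand_pairs :: "nat \<Rightarrow> nat set \<Rightarrow> (nat \<times> nat) set" where
  "rand_pairs n S = {(u,v). u < v \<and> v < n \<and> \<not> (u \<in> S \<and> v \<in> S)}"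

definition planted_pmf :: "nat \<Rightarrow> nat set \<Rightarrow> real \<Rightarrow> (nat \<times> nat \<Rightarrow> bool) pmf" where
  "planted_pmf n S p = Pi_pmf (rand_pairs n S) False (\<lambda>_. bernoulli_pmf p)"

definition planted_adj :: "nat set \<Rightarrow> (nat \<Rightarrow> nat \<Rightarrow> bool) \<Rightarrow> (nat \<times> nat \<Rightarrow> bool)
    \<Rightarrow> nat \<Rightarrow> nat \<Rightarrow> bool" where
  "planted_adj S H X u v =
     (if u \<in> S \<and> v \<in> S then H u v
      else if u < v then X (u, v) else if v < u then X (v, u) else False)"

definition bipartite_on :: "(nat \<Rightarrow> nat \<Rightarrow> bool) \<Rightarrow> nat set \<Rightarrow> bool" where
  "bipartite_on E A = (\<exists>T \<subseteq> A. \<forall>u\<in>A. \<forall>v\<in>A. E u v \<longrightarrow> (u \<in> T \<longleftrightarrow> v \<notin> T))"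

definition connected_on :: "(nat \<Rightarrow> nat \<Rightarrow> bool) \<Rightarrow> nat set \<Rightarrow> bool" where
  "connected_on E A = (\<forall>u\<in>A. \<forall>v\<in>A. (\<lambda>x y. x \<in> A \<and> y \<in> A \<and> E x y)\<^sup>*\<^sup>* u v)"

definition regular_on :: "(nat \<Rightarrow> nat \<Rightarrow> bool) \<Rightarrow> nat set \<Rightarrow> nat \<Rightarrow> bool" where
  "regular_on E A d = (\<forall>v\<in>A. card {u\<in>A. E v u} = d)"

definition planted_graph :: "nat set \<Rightarrow> nat \<Rightarrow> (nat \<Rightarrow> nat \<Rightarrow> bool) \<Rightarrow> bool" where
  "planted_graph S d H =
     ((\<forall>u\<in>S. \<forall>v\<in>S. H u v \<longleftrightarrow> H v u) \<and> (\<forall>u\<in>S. \<not> H u u) \<and>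
      connected_on H S \<and> regular_on H S d \<and>
      (\<exists>S1 S2. S1 \<union> S2 = S \<and> S1 \<inter> S2 = {} \<and>
         (\<forall>u\<in>S. \<forall>v\<in>S. H u v \<longrightarrow> (u \<in> S1 \<and> v \<in> S2) \<or> (u \<in> S2 \<and> v \<in> S1))))"

end

theory Submission
  imports Defs
begin

text \<open>
  Let A \<noteq> S be a k-set with t = |A - S| \<ge> 1 vertices outside S. If A induces a bipartite graph,
  some 2-colouring T of A is proper on the planted edges inside A \<inter> S, and every random pair
  inside A whose ends get the same colour is a non-edge. Such a T is determined by one bit per
  component of H[A \<inter> S] and per vertex of A - S, and since H is connected and d-regular, H[A \<inter> S]
  has at most t (2 \<surd>k + 2) components. If t \<le> k/4, the colour classes of A \<inter> S are independent in
  H, hence have at most k/2 vertices, so every vertex of A - S has k/4 monochromatic partners in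
  A \<inter> S; otherwise half of A - S is monochromatic. Either way the forced non-edges outweigh the
  colourings, A is bipartite with probability at most n^(-5t), and there are at most n^(2t)
  such sets A.
\<close>

lemma prob_Pi_pmf_all_False:
  assumes "finite A" "P \<subseteq> A" "0 \<le> p" "p \<le> 1"
  shows "measure_pmf.prob (Pi_pmf A False (\<lambda>_. bernoulli_pmf p)) {X. \<forall>e\<in>P. \<not> X e}
           = (1 - p) ^ card P"
proof -
  have "{X. \<forall>e\<in>P. \<not> X e} = Pi A (\<lambda>e. if e \<in> P then {False} else UNIV)"
    using assms(2) by (auto simp: Pi_def split: if_splits)
  hence "measure_pmf.prob (Pi_pmf A False (\<lambda>_. bernoulli_pmf p)) {X. \<forall>e\<in>P. \<not> X e}
     = (\<Prod>e\<in>A. measure_pmf.prob (bernoulli_pmf p) (if e \<in> P then {False} else UNIV))"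
    using measure_Pi_pmf_Pi[OF assms(1)] by simp
  also have "\<dots> = (\<Prod>e\<in>A. if e \<in> P then 1 - p else 1)"
    using assms by (intro prod.cong) (auto simp: measure_pmf_single)
  also have "\<dots> = (1 - p) ^ card (A \<inter> P)"
    using assms(1) by (simp add: prod.If_cases)
  finally show ?thesis using assms(2) by (simp add: Int_absorb1)
qed

lemma sum_card_filter_swap:
  assumes "finite X" "finite Y"
  shows "(\<Sum>x\<in>X. card {y\<in>Y. R x y}) = (\<Sum>y\<in>Y. card {x\<in>X. R x y})"
  using sum.swap_restrict[OF assms, of "\<lambda>_ _. 1" R] by (simp only: card_eq_sum)

lemma card_less_pairs:
  fixes Y :: "'a::linorder set"
  assumes "finite Y"
  shows "2 * card {(u, v). u \<in> Y \<and> v \<in> Y \<and> u < v} + card Y = card Y * card Y"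
proof -
  let ?P = "{(u, v). u \<in> Y \<and> v \<in> Y \<and> u < v}" and ?Q = "{(u, v). u \<in> Y \<and> v \<in> Y \<and> v < u}"
  let ?D = "(\<lambda>u. (u, u)) ` Y"
  have fin: "finite ?P" "finite ?Q" "finite ?D"
    by (rule finite_subset[of _ "Y \<times> Y"]; use assms in auto)+
  have "Y \<times> Y = (?P \<union> ?Q) \<union> ?D" by auto
  hence "card Y * card Y = card (?P \<union> ?Q \<union> ?D)"
    by (metis card_cartesian_product)
  also have "\<dots> = card (?P \<union> ?Q) + card ?D"
    using fin by (intro card_Un_disjoint) auto
  also have "card (?P \<union> ?Q) = card ?P + card ?Q"
    using fin by (intro card_Un_disjoint) auto
  also have "?Q = prod.swap ` ?P" by auto
  also have "card (prod.swap ` ?P) = card ?P" by (simp add: card_image)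
  also have "card ?D = card Y" by (simp add: card_image inj_on_def)
  finally show ?thesis by simp
qed

lemma card_Diff_commute:
  assumes "finite A" "finite B" "card A = card B"
  shows "card (A - B) = card (B - A)"
  using assms by (simp add: card_Diff_subset_Int Int_commute)

lemma Diff_nonempty_if_card_eq:
  assumes "finite B" "card A = card B" "A \<noteq> B"
  shows "A - B \<noteq> {}"
  using assms card_subset_eq[OF assms(1)] by auto

lemma real_le_exp_if_le_two_power:
  fixes c N :: nat
  assumes "c \<le> 2 ^ N"
  shows "real c \<le> exp (real N)"
proof -
  have "real c \<le> 2 ^ N" using assms by (metis of_nat_le_iff of_nat_numeral of_nat_power)
  also have "(2::real) ^ N \<le> exp 1 ^ N"
    using exp_ge_add_one_self[of 1] by (intro power_mono) auto
  finally show ?thesis by (simp add: exp_of_nat_mult[symmetric])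
qed

lemma three_le_ln:
  assumes "27 \<le> (x::real)"
  shows "3 \<le> ln x"
proof -
  have "exp (3::real) = exp 1 ^ 3" by (simp add: exp_of_nat_mult[symmetric])
  also have "\<dots> \<le> 3 ^ 3" using exp_bound[of 1] by (intro power_mono) auto
  finally show ?thesis using assms by (simp add: ln_ge_iff)
qed

lemma exponent_bound_few_outside:
  fixes s L p t :: real
  assumes "3 \<le> L" "30 \<le> s" "10 * L \<le> p * s" "p \<le> 1" "0 \<le> t"
  shows "t * (2 * s + 3) - p * (t * (s * s) / 4) \<le> - (5 * t * L)"
proof -
  have "10 * L * s \<le> p * s * s" using assms(2,3) by (intro mult_right_mono) auto
  moreover have "3 * s \<le> L * s" using assms(1,2) by (intro mult_right_mono) auto
  moreover have "p * s \<le> s" using assms(2,4) by (simp add: mult_left_le_one_le)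
  ultimately have "2 * s + 3 + 5 * L \<le> p * s * s / 4" using assms(2,3) by linarith
  hence "t * (2 * s + 3 + 5 * L) \<le> t * (p * s * s / 4)" using assms(5) by (rule mult_left_mono)
  thus ?thesis by (simp add: algebra_simps)
qed

lemma exponent_bound_many_outside:
  fixes s L p t :: real
  assumes "3 \<le> L" "30 \<le> s" "10 * L \<le> p * s" "0 \<le> p" "p \<le> 1" "s * s / 4 < t"
  shows "4 * t - p * (t * (t - 2) / 8) \<le> - (5 * t * L)"
proof -
  have "p * (s * s / 4 - 2) \<le> p * (t - 2)" using assms(4,6) by (intro mult_left_mono) auto
  hence "p * (s * s) / 4 - 2 * p \<le> p * (t - 2)" by (simp add: algebra_simps)
  moreover have "10 * L * (s / 4) \<le> p * s * (s / 4)" using assms(2,3) by (intro mult_right_mono) auto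
  hence "L * s * (10 / 4) \<le> p * (s * s) / 4" by (simp add: algebra_simps)
  moreover have "10 * L * (30 / 4) \<le> 10 * L * (s / 4)" using assms(1,2) by (intro mult_left_mono) auto
  hence "75 * L \<le> L * s * (10 / 4)" by (simp add: algebra_simps)
  ultimately have "32 + 40 * L \<le> p * (t - 2)" using assms(1,5) by linarith
  moreover have "0 \<le> t" using assms(6) zero_le_square[of s] by linarith
  ultimately have "t * (32 + 40 * L) \<le> t * (p * (t - 2))" by (intro mult_left_mono)
  thus ?thesis by (simp add: algebra_simps)
qed

lemma card_sets_by_outside:
  assumes "S \<subseteq> {..<n}"
  shows "card {A. A \<subseteq> {..<n} \<and> card A = card S \<and> card (A - S) = t} \<le> n ^ t * n ^ t"
proof -
  let ?F = "{A. A \<subseteq> {..<n} \<and> card A = card S \<and> card (A - S) = t}"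
  let ?Q = "{B. B \<subseteq> {..<n} \<and> card B = t}"
  have finS: "finite S" using assms finite_subset by blast
  have "inj_on (\<lambda>A. (S - A, A - S)) ?F"
  proof (rule inj_onI)
    fix A A' assume "(S - A, A - S) = (S - A', A' - S)"
    moreover have "A = (S - (S - A)) \<union> (A - S)" "A' = (S - (S - A')) \<union> (A' - S)" by auto
    ultimately show "A = A'" by (metis prod.inject)
  qed
  moreover have "(\<lambda>A. (S - A, A - S)) ` ?F \<subseteq> ?Q \<times> ?Q"
  proof
    fix x assume "x \<in> (\<lambda>A. (S - A, A - S)) ` ?F"
    then obtain A where A: "A \<in> ?F" "x = (S - A, A - S)" by blast
    have "finite A" using A(1) finite_subset by blast
    hence "card (S - A) = t" using A(1) card_Diff_commute[OF _ finS] by force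
    thus "x \<in> ?Q \<times> ?Q" using A assms by auto
  qed
  ultimately have "card ?F \<le> card (?Q \<times> ?Q)"
    by (intro card_inj_on_le) (auto intro: finite_subset[of _ "Pow {..<n}"])
  also have "\<dots> = (n choose t) * (n choose t)"
    by (simp add: card_cartesian_product n_subsets)
  also have "\<dots> \<le> n ^ t * n ^ t"
    by (cases "t \<le> n") (auto intro: mult_mono binomial_le_pow simp: binomial_eq_0)
  finally show ?thesis .
qed

locale planted_subgraph =
  fixes S :: "nat set" and d :: nat and H :: "nat \<Rightarrow> nat \<Rightarrow> bool"
  assumes finite_S: "finite S" and planted: "planted_graph S d H"
begin

lemma H_sym: "u \<in> S \<Longrightarrow> v \<in> S \<Longrightarrow> H u v \<Longrightarrow> H v u"
  using planted unfolding planted_graph_def by blast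

lemma H_irrefl: "u \<in> S \<Longrightarrow> \<not> H u u"
  using planted unfolding planted_graph_def by blast

lemma card_neighbours: "v \<in> S \<Longrightarrow> card {u\<in>S. H v u} = d"
  using planted unfolding planted_graph_def regular_on_def by blast

lemma H_connected: "u \<in> S \<Longrightarrow> v \<in> S \<Longrightarrow> (\<lambda>x y. x \<in> S \<and> y \<in> S \<and> H x y)\<^sup>*\<^sup>* u v"
  using planted unfolding planted_graph_def connected_on_def by blast

lemma bipartite_on_S: "bipartite_on H S"
proof -
  obtain S1 S2 where parts: "S1 \<union> S2 = S" "S1 \<inter> S2 = {}"
    "\<forall>u\<in>S. \<forall>v\<in>S. H u v \<longrightarrow> (u \<in> S1 \<and> v \<in> S2) \<or> (u \<in> S2 \<and> v \<in> S1)"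
    using planted unfolding planted_graph_def by blast
  show ?thesis
    unfolding bipartite_on_def using parts by (intro exI[of _ S1]) blast
qed

lemma degree_pos:
  assumes "2 \<le> card S"
  shows "1 \<le> d"
proof -
  obtain u v where uv: "u \<in> S" "v \<in> S" "u \<noteq> v"
    using card_le_Suc0_iff_eq[OF finite_S] assms by force
  have "(\<lambda>x y. x \<in> S \<and> y \<in> S \<and> H x y)\<^sup>*\<^sup>* u v" using H_connected uv by auto
  then obtain w where "w \<in> S" "H u w"
    using uv(3) by (cases rule: converse_rtranclpE) auto
  hence "card {u'\<in>S. H u u'} \<noteq> 0" using finite_S by auto
  thus ?thesis using card_neighbours[OF uv(1)] by simp
qed

lemma card_independent_le_half:
  assumes I: "I \<subseteq> S" "\<forall>u\<in>I. \<forall>v\<in>I. \<not> H u v" and "1 \<le> d"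
  shows "2 * card I \<le> card S"
proof -
  have fin: "finite I" using finite_subset[OF I(1) finite_S] .
  have "d * card I = (\<Sum>v\<in>I. d)" by simp
  also have "\<dots> = (\<Sum>v\<in>I. card {u\<in>S. H v u})"
    using card_neighbours I(1) by (intro sum.cong) auto
  also have "\<dots> = (\<Sum>v\<in>I. card {u\<in>S - I. H v u})"
    using I by (intro sum.cong) (auto intro!: arg_cong[where f=card])
  also have "\<dots> = (\<Sum>u\<in>S - I. card {v\<in>I. H v u})"
    using fin finite_S by (intro sum_card_filter_swap) auto
  also have "\<dots> \<le> (\<Sum>u\<in>S - I. card {v\<in>S. H u v})"
    using I finite_S H_sym by (intro sum_mono card_mono) auto
  also have "\<dots> = d * card (S - I)" using card_neighbours by auto
  finally have "card I \<le> card (S - I)" using \<open>1 \<le> d\<close> by simp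
  thus ?thesis using card_Diff_subset[OF fin I(1)] card_mono[OF finite_S I(1)] by linarith
qed

definition reach :: "nat set \<Rightarrow> nat \<Rightarrow> nat \<Rightarrow> bool" where
  "reach B = (\<lambda>x y. x \<in> B \<and> y \<in> B \<and> H x y)\<^sup>*\<^sup>*"

definition component :: "nat set \<Rightarrow> nat \<Rightarrow> nat set" where
  "component B v = {u. reach B v u}"

definition components :: "nat set \<Rightarrow> nat set set" where
  "components B = component B ` B"

lemma reach_refl: "reach B v v"
  unfolding reach_def by simp

lemma reach_trans: "reach B x y \<Longrightarrow> reach B y z \<Longrightarrow> reach B x z"
  unfolding reach_def by (rule rtranclp_trans)

lemma reach_edge: "x \<in> B \<Longrightarrow> y \<in> B \<Longrightarrow> H x y \<Longrightarrow> reach B x y"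
  unfolding reach_def by auto

lemma reach_sym:
  assumes "B \<subseteq> S" "reach B x y"
  shows "reach B y x"
  using assms(2) unfolding reach_def
proof (induction rule: rtranclp_induct)
  case (step y z)
  have "(\<lambda>x y. x \<in> B \<and> y \<in> B \<and> H x y) z y" using step assms(1) H_sym by auto
  then show ?case using step(3) by (rule converse_rtranclp_into_rtranclp)
qed simp

lemma reach_in: "reach B x y \<Longrightarrow> x \<in> B \<Longrightarrow> y \<in> B"
  unfolding reach_def by (induction rule: rtranclp_induct) auto

lemma component_subset: "v \<in> B \<Longrightarrow> component B v \<subseteq> B"
  unfolding component_def using reach_in by auto

lemma in_component: "v \<in> component B v"
  unfolding component_def by (simp add: reach_refl)

lemma finite_component: "B \<subseteq> S \<Longrightarrow> v \<in> B \<Longrightarrow> finite (component B v)"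
  using component_subset finite_S finite_subset by (metis subset_trans)

lemma component_eq:
  assumes "B \<subseteq> S" "reach B v u"
  shows "component B v = component B u"
proof -
  have "reach B u v" using reach_sym[OF assms] .
  then show ?thesis
    unfolding component_def using assms(2) reach_trans[of B u v] reach_trans[of B v u] by blast
qed

lemma components_disjoint:
  assumes "B \<subseteq> S"
  shows "pairwise disjnt (components B)"
proof (rule pairwiseI)
  fix C C' assume "C \<in> components B" "C' \<in> components B" "C \<noteq> C'"
  then obtain v v' where C: "C = component B v" "C' = component B v'"
    unfolding components_def by blast
  show "disjnt C C'"
  proof (rule ccontr)
    assume "\<not> disjnt C C'"
    then obtain x where "reach B v x" "reach B v' x" using C unfolding disjnt_def component_def by blast
    hence "reach B v v'" using reach_sym[OF assms] reach_trans by blast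
    thus False using component_eq[OF assms] C \<open>C \<noteq> C'\<close> by simp
  qed
qed

lemma components_finite_nonempty:
  assumes "B \<subseteq> S" "C \<in> components B"
  shows "finite C" "C \<noteq> {}" "C \<subseteq> B"
proof -
  obtain v where "v \<in> B" "C = component B v" using assms(2) unfolding components_def by blast
  then show "finite C" "C \<noteq> {}" "C \<subseteq> B"
    using finite_component[OF assms(1)] component_subset in_component[of v B] by auto
qed

lemma Min_component:
  assumes "B \<subseteq> S" "C \<in> components B"
  shows "Min C \<in> C"
  using components_finite_nonempty[OF assms] by (intro Min_in)

lemma inj_on_components:
  assumes "B \<subseteq> S" "\<And>C. C \<in> components B \<Longrightarrow> g C \<in> C"
  shows "inj_on g (components B)"
proof (rule inj_onI)
  fix C C' assume C: "C \<in> components B" "C' \<in> components B" "g C = g C'"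
  show "C = C'"
  proof (rule ccontr)
    assume "C \<noteq> C'"
    hence "disjnt C C'" using components_disjoint[OF assms(1)] C unfolding pairwise_def by blast
    thus False using assms(2)[OF C(1)] assms(2)[OF C(2)] C(3) unfolding disjnt_def by auto
  qed
qed

lemma reach_boundary:
  assumes B: "B \<subseteq> S" and v: "v \<in> B" and r: "r \<in> S" "r \<notin> B"
  shows "\<exists>u. reach B v u \<and> (\<exists>r'\<in>S - B. H u r')"
proof -
  have "(\<lambda>x y. x \<in> S \<and> y \<in> S \<and> H x y)\<^sup>*\<^sup>* v r" using H_connected v B r by auto
  then show ?thesis using v
  proof (induction rule: converse_rtranclp_induct)
    case base then show ?case using r by auto
  next
    case (step x x')
    show ?case
    proof (cases "x' \<in> B")
      case True
      then obtain u where "reach B x' u" "\<exists>r'\<in>S - B. H u r'" using step by auto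
      moreover have "reach B x x'" using step True by (intro reach_edge) auto
      ultimately show ?thesis using reach_trans by blast
    qed (use step reach_refl in auto)
  qed
qed

text \<open>By connectivity every component of H[B] sends an edge out of B, and the at most
  d * |S - B| such edge ends in B lie in distinct components.\<close>

lemma card_components_le_boundary:
  assumes B: "B \<subseteq> S" "B \<noteq> S"
  shows "card (components B) \<le> d * card (S - B)"
proof -
  obtain r where r: "r \<in> S" "r \<notin> B" using B by auto
  define f where "f C = (SOME u. u \<in> C \<and> (\<exists>r'\<in>S - B. H u r'))" for C
  have f: "f C \<in> C \<and> (\<exists>r'\<in>S - B. H (f C) r')" if C: "C \<in> components B" for C
  proof -
    obtain v where v: "v \<in> B" "C = component B v" using C unfolding components_def by blast
    obtain u where "reach B v u" "\<exists>r'\<in>S - B. H u r'" using reach_boundary[OF B(1) v(1) r] by auto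
    hence "\<exists>u. u \<in> C \<and> (\<exists>r'\<in>S - B. H u r')" using v unfolding component_def by auto
    thus ?thesis unfolding f_def by (rule someI_ex)
  qed
  have "inj_on f (components B)" using inj_on_components[OF B(1)] f by blast
  moreover have "f ` components B \<subseteq> (\<Union>r\<in>S - B. {u\<in>S. H r u})"
  proof
    fix u assume "u \<in> f ` components B"
    then obtain C where C: "C \<in> components B" "u = f C" by blast
    then obtain r where r: "r \<in> S - B" "H u r" using f by blast
    have "u \<in> B" using C f components_finite_nonempty(3)[OF B(1) C(1)] by blast
    thus "u \<in> (\<Union>r\<in>S - B. {u\<in>S. H r u})" using r B(1) H_sym by blast
  qed
  ultimately have "card (components B) \<le> card (\<Union>r\<in>S - B. {u\<in>S. H r u})"
    using finite_S by (intro card_inj_on_le) auto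
  also have "\<dots> \<le> (\<Sum>r\<in>S - B. card {u\<in>S. H r u})"
    using finite_S by (intro card_UN_le) auto
  also have "\<dots> = d * card (S - B)" using card_neighbours by simp
  finally show ?thesis .
qed

lemma card_large_components:
  assumes B: "B \<subseteq> S"
  shows "d * card {C\<in>components B. d < 2 * card C} \<le> 2 * card S"
proof -
  let ?L = "{C\<in>components B. d < 2 * card C}"
  have "d * card ?L \<le> (\<Sum>C\<in>?L. 2 * card C)"
    using sum_mono[of ?L "\<lambda>_. d" "\<lambda>C. 2 * card C"] by (simp add: mult.commute)
  also have "\<dots> = 2 * card (\<Union>?L)"
    using components_finite_nonempty(1)[OF B] pairwise_subset[OF components_disjoint[OF B]]
    by (subst card_Union_disjoint) (auto simp: sum_distrib_left)
  also have "\<dots> \<le> 2 * card S"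
    using components_finite_nonempty(3)[OF B] B finite_S by (intro mult_left_mono card_mono) auto
  finally show ?thesis .
qed

text \<open>All neighbours of v inside B lie in its component.\<close>

lemma outer_degree_in_small_component:
  assumes B: "B \<subseteq> S" and v: "v \<in> B" and small: "2 * card (component B v) \<le> d"
  shows "d < 2 * card {r\<in>S - B. H v r}"
proof -
  let ?C = "component B v"
  have fin: "finite ?C" using finite_component[OF B v] .
  have "{u\<in>S. H v u} = {u\<in>B. H v u} \<union> {r\<in>S - B. H v r}" using B by auto
  hence "d = card {u\<in>B. H v u} + card {r\<in>S - B. H v r}"
    using card_neighbours[of v] subsetD[OF B v] finite_S finite_subset[OF B finite_S]
    by (simp add: card_Un_disjoint disjoint_iff)
  moreover have sub: "{u\<in>B. H v u} \<subseteq> ?C - {v}"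
  proof
    fix u assume u: "u \<in> {u\<in>B. H v u}"
    hence "u \<in> ?C" using reach_edge[OF v] unfolding component_def by auto
    moreover have "u \<noteq> v" using u H_irrefl[OF subsetD[OF B v]] by auto
    ultimately show "u \<in> ?C - {v}" by simp
  qed
  hence "card {u\<in>B. H v u} \<le> card ?C - 1"
    using card_mono[OF _ sub] fin in_component[of v B] by simp
  moreover have "1 \<le> card ?C"
    using fin in_component[of v B] by (metis One_nat_def Suc_leI card_gt_0_iff empty_iff)
  ultimately show ?thesis using small by linarith
qed

lemma card_small_components:
  assumes B: "B \<subseteq> S"
  shows "d * card {C\<in>components B. 2 * card C \<le> d} \<le> 2 * d * card (S - B)"
proof -
  let ?M = "{C\<in>components B. 2 * card C \<le> d}"
  let ?V = "Min ` ?M"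
  have VB: "?V \<subseteq> B"
  proof
    fix v assume "v \<in> ?V"
    then obtain C where "C \<in> components B" "v = Min C" by blast
    thus "v \<in> B" using Min_component[OF B] components_finite_nonempty(3)[OF B] by blast
  qed
  have fV: "finite ?V" using finite_subset[OF VB] finite_subset[OF B finite_S] by blast
  have outer: "d < 2 * card {r\<in>S - B. H v r}" if v: "v \<in> ?V" for v
  proof -
    obtain C where C: "C \<in> components B" "2 * card C \<le> d" "v = Min C" using v by blast
    obtain w where w: "C = component B w" using C(1) unfolding components_def by blast
    have "reach B w v" using Min_component[OF B C(1)] C(3) w unfolding component_def by simp
    hence "C = component B v" using component_eq[OF B] w by simp
    thus ?thesis using outer_degree_in_small_component[OF B] C VB v by auto
  qed
  have "d * card ?M = d * card ?V"
    using inj_on_subset[OF inj_on_components[OF B Min_component[OF B]]] by (simp add: card_image)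
  also have "\<dots> = (\<Sum>v\<in>?V. d)" by simp
  also have "\<dots> \<le> (\<Sum>v\<in>?V. 2 * card {r\<in>S - B. H v r})"
    using outer by (intro sum_mono) (simp add: less_imp_le)
  also have "\<dots> = 2 * (\<Sum>r\<in>S - B. card {v\<in>?V. H v r})"
    using sum_card_filter_swap[OF fV, of "S - B" H] finite_S
    by (simp only: sum_distrib_left[symmetric]) simp
  also have "\<dots> \<le> 2 * (\<Sum>r\<in>S - B. card {u\<in>S. H r u})"
    using VB B H_sym finite_S by (intro mult_left_mono sum_mono card_mono) auto
  also have "\<dots> = 2 * d * card (S - B)" using card_neighbours by simp
  finally show ?thesis .
qed

lemma card_components_le_sqrt:
  assumes B: "B \<subseteq> S" "B \<noteq> S" and "1 \<le> d"
  shows "real (card (components B)) \<le> real (card (S - B)) * (2 * sqrt (card S) + 2)"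
proof -
  define c where "c = real (card (components B))"
  define t where "t = real (card (S - B))"
  define s where "s = sqrt (card S)"
  have t1: "1 \<le> t"
    unfolding t_def using B finite_S by (simp add: Suc_leI card_gt_0_iff)
  have s0: "0 \<le> s" unfolding s_def by simp
  have c_boundary: "c \<le> real d * t"
    using card_components_le_boundary[OF B] unfolding c_def t_def by (simp flip: of_nat_mult)
  let ?L = "{C\<in>components B. d < 2 * card C}" and ?M = "{C\<in>components B. 2 * card C \<le> d}"
  have "card (components B) = card (?L \<union> ?M)" by (rule arg_cong[where f=card]) auto
  also have "\<dots> \<le> card ?L + card ?M" by (rule card_Un_le)
  finally have "d * card (components B) \<le> d * card ?L + d * card ?M"
    by (simp add: add_mult_distrib2[symmetric])
  hence "d * card (components B) \<le> 2 * card S + 2 * d * card (S - B)"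
    using card_large_components[OF B(1)] card_small_components[OF B(1)] by linarith
  hence "real (d * card (components B)) \<le> real (2 * card S + 2 * d * card (S - B))"
    by (simp only: of_nat_le_iff)
  hence c_degree: "real d * c \<le> 2 * (s * s) + 2 * real d * t"
    unfolding c_def t_def s_def by simp
  show ?thesis
  proof (cases "real d \<le> s")
    case True
    have "c \<le> s * t" using c_boundary mult_right_mono[OF True, of t] t1 by linarith
    also have "\<dots> \<le> t * (2 * s + 2)" using s0 t1 by (simp add: algebra_simps)
    finally show ?thesis unfolding c_def t_def s_def .
  next
    case False
    have "2 * (s * s) \<le> 2 * (real d * s)" using False s0 by (intro mult_left_mono mult_right_mono) auto
    hence "real d * c \<le> real d * (2 * s + 2 * t)" using c_degree by (simp add: algebra_simps)
    hence "c \<le> 2 * s + 2 * t" using \<open>1 \<le> d\<close> by (simp add: mult_le_cancel_left)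
    also have "\<dots> \<le> t * (2 * s + 2)" using mult_right_mono[OF t1 s0] by (simp add: algebra_simps)
    finally show ?thesis unfolding c_def t_def s_def .
  qed
qed

lemma proper_colourings_agree_on_reach:
  assumes "\<forall>u\<in>B. \<forall>v\<in>B. H u v \<longrightarrow> (u \<in> T \<longleftrightarrow> v \<notin> T)"
    and "\<forall>u\<in>B. \<forall>v\<in>B. H u v \<longrightarrow> (u \<in> T' \<longleftrightarrow> v \<notin> T')"
    and "reach B x y" "x \<in> T \<longleftrightarrow> x \<in> T'"
  shows "y \<in> T \<longleftrightarrow> y \<in> T'"
  using assms(3,4) unfolding reach_def
proof (induction rule: rtranclp_induct)
  case (step y z)
  then show ?case using assms(1,2) by blast
qed simp

definition colouring :: "nat set \<Rightarrow> nat set \<Rightarrow> bool" where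
  "colouring A T \<longleftrightarrow> T \<subseteq> A \<and> (\<forall>u\<in>A \<inter> S. \<forall>v\<in>A \<inter> S. H u v \<longrightarrow> (u \<in> T \<longleftrightarrow> v \<notin> T))"

lemma finite_colourings: "finite A \<Longrightarrow> finite {T. colouring A T}"
  unfolding colouring_def by (rule finite_subset[of _ "Pow A"]) auto

lemma card_colourings_le_pow:
  assumes "finite A"
  shows "card {T. colouring A T} \<le> 2 ^ card A"
proof -
  have "card {T. colouring A T} \<le> card (Pow A)"
    using assms by (intro card_mono) (auto simp: colouring_def)
  thus ?thesis using assms by (simp add: card_Pow)
qed

text \<open>A colouring is determined by its values on A - S and on the least vertex of each
  component of H[A \<inter> S].\<close>

lemma card_colourings_le_components:
  assumes A: "finite A"
  shows "card {T. colouring A T} \<le> 2 ^ (card (components (A \<inter> S)) + card (A - S))"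
proof -
  let ?B = "A \<inter> S" and ?W = "A - S"
  define Z where "Z = Min ` components ?B"
  have B: "?B \<subseteq> S" by auto
  have fZ: "finite Z" unfolding Z_def components_def using A by simp
  have cZ: "card Z \<le> card (components ?B)"
    unfolding Z_def using A by (intro card_image_le) (simp add: components_def)
  have rep: "\<exists>z\<in>Z. reach ?B z x" if x: "x \<in> ?B" for x
  proof -
    have "Min (component ?B x) \<in> component ?B x"
      using Min_component[OF B] x unfolding components_def by blast
    hence "reach ?B x (Min (component ?B x))" unfolding component_def by simp
    moreover have "Min (component ?B x) \<in> Z" unfolding Z_def components_def using x by blast
    ultimately show ?thesis using reach_sym[OF B] by blast
  qed
  have "inj_on (\<lambda>T. T \<inter> (Z \<union> ?W)) {T. colouring A T}"
  proof (rule inj_onI)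
    fix T T' assume T: "T \<in> {T. colouring A T}" "T' \<in> {T. colouring A T}"
      and eq: "T \<inter> (Z \<union> ?W) = T' \<inter> (Z \<union> ?W)"
    have "x \<in> T \<longleftrightarrow> x \<in> T'" if x: "x \<in> A" for x
    proof (cases "x \<in> S")
      case True
      then obtain z where z: "z \<in> Z" "reach ?B z x" using rep x by blast
      have "z \<in> T \<longleftrightarrow> z \<in> T'" using eq z(1) by blast
      thus ?thesis
        using proper_colourings_agree_on_reach[OF _ _ z(2)] T unfolding colouring_def by blast
    qed (use eq x in blast)
    thus "T = T'" using T unfolding colouring_def by blast
  qed
  hence "card {T. colouring A T} \<le> card (Pow (Z \<union> ?W))"
    using fZ A by (intro card_inj_on_le) auto
  also have "\<dots> \<le> 2 ^ (card Z + card ?W)"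
    using fZ A card_Un_le[of Z ?W] by (simp add: card_Pow power_increasing)
  also have "\<dots> \<le> 2 ^ (card (components ?B) + card ?W)"
    using cZ by (intro power_increasing) auto
  finally show ?thesis .
qed

end

lemma finite_rand_pairs: "finite (rand_pairs n S)"
  unfolding rand_pairs_def by (rule finite_subset[of _ "{..<n} \<times> {..<n}"]) auto

locale planted_model = planted_subgraph S d H for S d H +
  fixes n :: nat and p :: real
  assumes S_sub: "S \<subseteq> {..<n}" and p_nonneg: "0 \<le> p" and p_le_1: "p \<le> 1"
    and p_large: "10 * ln (real n) / sqrt (real (card S)) \<le> p" and n_ge_27: "27 \<le> n"
begin

definition mono_pairs :: "nat set \<Rightarrow> nat set \<Rightarrow> (nat \<times> nat) set" where
  "mono_pairs A T = {(u, v). (u, v) \<in> rand_pairs n S \<and> u \<in> A \<and> v \<in> A \<and> (u \<in> T \<longleftrightarrow> v \<in> T)}"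

lemma finite_mono_pairs: "finite (mono_pairs A T)"
  unfolding mono_pairs_def by (rule finite_subset[OF _ finite_rand_pairs]) auto

lemma bipartite_imp_colouring:
  assumes "bipartite_on (planted_adj S H X) A"
  shows "\<exists>T. colouring A T \<and> (\<forall>e\<in>mono_pairs A T. \<not> X e)"
proof -
  obtain T where T: "T \<subseteq> A"
    "\<forall>u\<in>A. \<forall>v\<in>A. planted_adj S H X u v \<longrightarrow> (u \<in> T \<longleftrightarrow> v \<notin> T)"
    using assms unfolding bipartite_on_def by blast
  have "colouring A T" unfolding colouring_def using T by (auto simp: planted_adj_def)
  moreover have "\<not> X e" if e: "e \<in> mono_pairs A T" for e
  proof -
    obtain u v where uv: "e = (u, v)" by (cases e)
    have "planted_adj S H X u v = X (u, v)"
      using e uv unfolding mono_pairs_def rand_pairs_def planted_adj_def by auto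
    thus ?thesis using T(2) e uv unfolding mono_pairs_def by blast
  qed
  ultimately show ?thesis by blast
qed

text \<open>Union bound over the colourings of A; a colouring with at least m monochromatic
  random pairs survives with probability (1 - p)^m \<le> exp (- p * m).\<close>

lemma prob_bipartite_le:
  assumes A: "finite A" and m: "\<And>T. colouring A T \<Longrightarrow> m \<le> real (card (mono_pairs A T))"
    and E: "real (card {T. colouring A T}) \<le> exp E"
  shows "measure_pmf.prob (planted_pmf n S p) {X. bipartite_on (planted_adj S H X) A}
           \<le> exp (E - p * m)"
proof -
  let ?M = "planted_pmf n S p"
  have "{X. bipartite_on (planted_adj S H X) A}
      \<subseteq> (\<Union>T\<in>{T. colouring A T}. {X. \<forall>e\<in>mono_pairs A T. \<not> X e})"
    using bipartite_imp_colouring by blast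
  hence "measure_pmf.prob ?M {X. bipartite_on (planted_adj S H X) A}
      \<le> measure_pmf.prob ?M (\<Union>T\<in>{T. colouring A T}. {X. \<forall>e\<in>mono_pairs A T. \<not> X e})"
    by (intro measure_pmf.finite_measure_mono) auto
  also have "\<dots> \<le> (\<Sum>T\<in>{T. colouring A T}. measure_pmf.prob ?M {X. \<forall>e\<in>mono_pairs A T. \<not> X e})"
    by (intro measure_subadditive_finite finite_colourings A) (auto simp: measure_pmf.emeasure_finite)
  also have "\<dots> \<le> (\<Sum>T\<in>{T. colouring A T}. exp (- p * m))"
  proof (intro sum_mono)
    fix T assume T: "T \<in> {T. colouring A T}"
    have "measure_pmf.prob ?M {X. \<forall>e\<in>mono_pairs A T. \<not> X e} = (1 - p) ^ card (mono_pairs A T)"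
      unfolding planted_pmf_def using finite_rand_pairs p_nonneg p_le_1
      by (intro prob_Pi_pmf_all_False) (auto simp: mono_pairs_def)
    also have "\<dots> \<le> exp (- p) ^ card (mono_pairs A T)"
      using p_le_1 exp_ge_add_one_self[of "- p"] by (intro power_mono) auto
    also have "\<dots> = exp (- p * card (mono_pairs A T))"
      by (simp add: exp_of_nat_mult[symmetric] mult.commute)
    also have "\<dots> \<le> exp (- p * m)" using m T p_nonneg by (auto intro: mult_left_mono)
    finally show "measure_pmf.prob ?M {X. \<forall>e\<in>mono_pairs A T. \<not> X e} \<le> exp (- p * m)" .
  qed
  also have "\<dots> \<le> exp E * exp (- p * m)" using E by (simp add: mult_right_mono)
  finally show ?thesis by (simp add: exp_add[symmetric])
qed

text \<open>Each w \<in> A - S is monochromatic with the whole colour class of A \<inter> S it joins; both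
  classes are independent in H, so each has at least |S| / 4 vertices.\<close>

lemma card_mono_pairs_cross:
  assumes A: "A \<subseteq> {..<n}" "card A = card S" and T: "colouring A T"
    and "1 \<le> d" and few: "4 * card (A - S) \<le> card S"
  shows "card (A - S) * card S \<le> 4 * card (mono_pairs A T)"
proof -
  let ?B = "A \<inter> S" and ?W = "A - S"
  have fA: "finite A" using A(1) finite_subset by blast
  define partners where "partners w = (if w \<in> T then ?B \<inter> T else ?B - T)" for w
  have "2 * card (?B \<inter> T) \<le> card S" "2 * card (?B - T) \<le> card S"
    using T \<open>1 \<le> d\<close> unfolding colouring_def by (auto intro!: card_independent_le_half)
  moreover have "card ?B + card ?W = card S"
    using A fA card_Un_disjoint[of ?B ?W] by (metis Int_Diff_Un Int_Diff_disjoint finite_Diff finite_Int)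
  moreover have "card (?B \<inter> T) + card (?B - T) = card ?B"
    using fA card_Un_disjoint[of "?B \<inter> T" "?B - T"]
    by (metis Int_Diff_Un Int_Diff_disjoint finite_Diff finite_Int)
  ultimately have partners_large: "card S \<le> 4 * card (partners w)" for w
    using few unfolding partners_def by auto
  have "inj_on (\<lambda>(w, v). (min w v, max w v)) (Sigma ?W partners)"
    unfolding partners_def by (rule inj_onI) (auto simp: min_def max_def split: if_splits)
  moreover have "(\<lambda>(w, v). (min w v, max w v)) ` Sigma ?W partners \<subseteq> mono_pairs A T"
    using A(1) unfolding partners_def mono_pairs_def rand_pairs_def
    by (auto simp: min_def max_def order.order_iff_strict split: if_splits)
  ultimately have "card (Sigma ?W partners) \<le> card (mono_pairs A T)"
    using finite_mono_pairs by (intro card_inj_on_le)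
  moreover have "card (Sigma ?W partners) = (\<Sum>w\<in>?W. card (partners w))"
    using fA unfolding partners_def by (intro card_SigmaI) auto
  moreover have "card ?W * card S \<le> (\<Sum>w\<in>?W. 4 * card (partners w))"
    using sum_mono[of ?W "\<lambda>_. card S", OF partners_large] by (simp add: mult.commute)
  ultimately show ?thesis by (simp add: sum_distrib_left[symmetric])
qed

text \<open>The larger colour class Y of A - S has at least |A - S| / 2 vertices, and all pairs
  inside Y are monochromatic random pairs.\<close>

lemma card_mono_pairs_outside:
  assumes A: "A \<subseteq> {..<n}" and T: "colouring A T"
  shows "real (card (A - S)) * (real (card (A - S)) - 2) \<le> 8 * real (card (mono_pairs A T))"
proof -
  let ?W = "A - S"
  have fA: "finite A" using A finite_subset by blast
  define Y where "Y = (if card (?W - T) \<le> card (?W \<inter> T) then ?W \<inter> T else ?W - T)"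
  define t where "t = real (card ?W)"
  define c where "c = real (card Y)"
  have "card (?W \<inter> T) + card (?W - T) = card ?W"
    using fA card_Un_disjoint[of "?W \<inter> T" "?W - T"]
    by (metis Int_Diff_Un Int_Diff_disjoint finite_Diff finite_Int)
  hence tc: "t \<le> 2 * c" unfolding t_def c_def Y_def by auto
  have fY: "finite Y" using fA unfolding Y_def by auto
  have "{(u, v). u \<in> Y \<and> v \<in> Y \<and> u < v} \<subseteq> mono_pairs A T"
    using A unfolding mono_pairs_def rand_pairs_def Y_def by (auto split: if_splits)
  hence "card {(u, v). u \<in> Y \<and> v \<in> Y \<and> u < v} \<le> card (mono_pairs A T)"
    using finite_mono_pairs by (rule card_mono[rotated])
  hence "2 * card {(u, v). u \<in> Y \<and> v \<in> Y \<and> u < v} + card Y \<le> 2 * card (mono_pairs A T) + card Y"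
    by simp
  hence "real (card Y * card Y) \<le> real (2 * card (mono_pairs A T) + card Y)"
    unfolding card_less_pairs[OF fY] by (simp only: of_nat_le_iff)
  hence pairs: "c * c - c \<le> 2 * real (card (mono_pairs A T))" unfolding c_def by simp
  show ?thesis
  proof (cases "card ?W = 0")
    case False
    hence "0 \<le> (2 * c - t) * (2 * c + t - 2)"
      using tc unfolding t_def by (intro mult_nonneg_nonneg) auto
    hence "t * (t - 2) \<le> 4 * (c * c - c)" by (simp add: algebra_simps)
    thus ?thesis using pairs unfolding t_def by (simp add: right_diff_distrib)
  qed simp
qed

lemma model_bounds:
  assumes "1 \<le> card S"
  shows "3 \<le> ln (real n)" "30 \<le> sqrt (card S)" "10 * ln (real n) \<le> p * sqrt (card S)"
    "1 \<le> d"
proof -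
  show L: "3 \<le> ln (real n)" using n_ge_27 by (intro three_le_ln) simp
  show "10 * ln (real n) \<le> p * sqrt (card S)"
    using p_large assms by (simp add: divide_le_eq mult.commute)
  moreover have "p * sqrt (card S) \<le> sqrt (card S)"
    using p_nonneg p_le_1 by (simp add: mult_left_le_one_le)
  ultimately show s: "30 \<le> sqrt (card S)" using L by linarith
  have "30 * 30 \<le> sqrt (card S) * sqrt (card S)" using s by (intro mult_mono) auto
  hence "2 \<le> card S" by simp
  thus "1 \<le> d" by (rule degree_pos)
qed

lemma prob_bipartite_few_outside:
  assumes A: "A \<subseteq> {..<n}" "card A = card S" "A \<noteq> S" and few: "4 * card (A - S) \<le> card S"
  shows "measure_pmf.prob (planted_pmf n S p) {X. bipartite_on (planted_adj S H X) A}
           \<le> exp (- (5 * real (card (A - S)) * ln (real n)))"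
proof -
  define t where "t = card (A - S)"
  define s where "s = sqrt (card S)"
  have fA: "finite A" using A(1) finite_subset by blast
  have "1 \<le> t" using Diff_nonempty_if_card_eq[OF finite_S A(2,3)] fA
    unfolding t_def by (simp add: Suc_le_eq card_gt_0_iff)
  hence "1 \<le> card S" using few unfolding t_def by linarith
  note bounds = model_bounds[OF this, folded s_def]
  have k: "real (card S) = s * s" unfolding s_def by simp
  have "S - A \<noteq> {}" using Diff_nonempty_if_card_eq[OF fA A(2)[symmetric]] A(3) by blast
  hence "A \<inter> S \<noteq> S" by blast
  moreover have "S - A \<inter> S = S - A" by blast
  ultimately have comps: "real (card (components (A \<inter> S))) \<le> real t * (2 * s + 2)"
    using card_components_le_sqrt[of "A \<inter> S"] bounds(4) card_Diff_commute[OF finite_S fA A(2)[symmetric]]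
    unfolding s_def t_def by simp
  have "real (card {T. colouring A T}) \<le> exp (real (card (components (A \<inter> S)) + t))"
    using card_colourings_le_components[OF fA] unfolding t_def by (rule real_le_exp_if_le_two_power)
  also have "\<dots> \<le> exp (real t * (2 * s + 3))" using comps by (simp add: algebra_simps)
  finally have "real (card {T. colouring A T}) \<le> exp (real t * (2 * s + 3))" .
  moreover have "real t * (s * s) / 4 \<le> real (card (mono_pairs A T))" if T: "colouring A T" for T
  proof -
    have "real (card (A - S) * card S) \<le> real (4 * card (mono_pairs A T))"
      using card_mono_pairs_cross[OF A(1,2) T bounds(4) few] by (simp only: of_nat_le_iff)
    thus ?thesis using k unfolding t_def by simp
  qed
  ultimately have "measure_pmf.prob (planted_pmf n S p) {X. bipartite_on (planted_adj S H X) A}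
      \<le> exp (real t * (2 * s + 3) - p * (real t * (s * s) / 4))"
    using prob_bipartite_le[OF fA] by blast
  also have "\<dots> \<le> exp (- (5 * real t * ln (real n)))"
    using exponent_bound_few_outside[OF bounds(1-3) p_le_1] by simp
  finally show ?thesis unfolding t_def .
qed

lemma prob_bipartite_many_outside:
  assumes A: "A \<subseteq> {..<n}" "card A = card S" "A \<noteq> S" and many: "card S < 4 * card (A - S)"
  shows "measure_pmf.prob (planted_pmf n S p) {X. bipartite_on (planted_adj S H X) A}
           \<le> exp (- (5 * real (card (A - S)) * ln (real n)))"
proof -
  define t where "t = card (A - S)"
  define s where "s = sqrt (card S)"
  have fA: "finite A" using A(1) finite_subset by blast
  have "1 \<le> t" using Diff_nonempty_if_card_eq[OF finite_S A(2,3)] fA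
    unfolding t_def by (simp add: Suc_le_eq card_gt_0_iff)
  moreover have "t \<le> card S" using card_mono[OF fA Diff_subset] A(2) unfolding t_def by simp
  ultimately have "1 \<le> card S" by linarith
  note bounds = model_bounds[OF this, folded s_def]
  have "real (card {T. colouring A T}) \<le> exp (real (card A))"
    using card_colourings_le_pow[OF fA] by (rule real_le_exp_if_le_two_power)
  also have "\<dots> \<le> exp (4 * real t)" using A(2) many unfolding t_def by simp
  finally have "real (card {T. colouring A T}) \<le> exp (4 * real t)" .
  moreover have "real t * (real t - 2) / 8 \<le> real (card (mono_pairs A T))" if "colouring A T" for T
    using card_mono_pairs_outside[OF A(1) that] unfolding t_def by simp
  ultimately have "measure_pmf.prob (planted_pmf n S p) {X. bipartite_on (planted_adj S H X) A}
      \<le> exp (4 * real t - p * (real t * (real t - 2) / 8))"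
    using prob_bipartite_le[OF fA] by blast
  also have "\<dots> \<le> exp (- (5 * real t * ln (real n)))"
  proof -
    have "s * s / 4 < real t" using many unfolding s_def t_def by simp
    thus ?thesis using exponent_bound_many_outside[OF bounds(1-3) p_nonneg p_le_1] by simp
  qed
  finally show ?thesis unfolding t_def .
qed

lemma prob_bipartite_other:
  assumes "A \<subseteq> {..<n}" "card A = card S" "A \<noteq> S"
  shows "measure_pmf.prob (planted_pmf n S p) {X. bipartite_on (planted_adj S H X) A}
           \<le> inverse (real n ^ (5 * card (A - S)))"
proof -
  have "measure_pmf.prob (planted_pmf n S p) {X. bipartite_on (planted_adj S H X) A}
      \<le> exp (- (real (5 * card (A - S)) * ln (real n)))"
    using prob_bipartite_few_outside[OF assms] prob_bipartite_many_outside[OF assms]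
    by (cases "4 * card (A - S) \<le> card S") auto
  also have "\<dots> = inverse (real n ^ (5 * card (A - S)))"
  proof -
    have "exp (real (5 * card (A - S)) * ln (real n)) = real n ^ (5 * card (A - S))"
      using n_ge_27 by (subst exp_of_nat_mult) simp
    thus ?thesis by (simp add: exp_minus)
  qed
  finally show ?thesis .
qed

lemma bipartite_on_planted_S: "bipartite_on (planted_adj S H X) S"
  using bipartite_on_S unfolding bipartite_on_def planted_adj_def by auto

definition rivals :: "nat set set" where
  "rivals = {A. A \<subseteq> {..<n} \<and> card A = card S \<and> A \<noteq> S}"

lemma finite_rivals: "finite rivals"
  unfolding rivals_def by (rule finite_subset[of _ "Pow {..<n}"]) auto

lemma card_outside_rival:
  assumes "A \<in> rivals"
  shows "card (A - S) \<in> {1..n}"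
proof -
  have "finite A" using assms finite_subset unfolding rivals_def by blast
  hence "1 \<le> card (A - S)"
    using Diff_nonempty_if_card_eq[OF finite_S] assms
    unfolding rivals_def by (simp add: Suc_le_eq card_gt_0_iff)
  moreover have "card (A - S) \<le> n"
    using assms card_mono[of "{..<n}" "A - S"] unfolding rivals_def by auto
  ultimately show ?thesis by simp
qed

lemma card_rivals_with_outside_le:
  assumes "1 \<le> t"
  shows "real (card {A\<in>rivals. card (A - S) = t}) * inverse (real n ^ (5 * t)) \<le> inverse (real n ^ 3)"
proof -
  have n: "1 \<le> real n" using n_ge_27 by simp
  have "finite {A. A \<subseteq> {..<n} \<and> card A = card S \<and> card (A - S) = t}"
    by (rule finite_subset[of _ "Pow {..<n}"]) auto
  hence "card {A\<in>rivals. card (A - S) = t}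
      \<le> card {A. A \<subseteq> {..<n} \<and> card A = card S \<and> card (A - S) = t}"
    by (rule card_mono) (auto simp: rivals_def)
  also have "\<dots> \<le> n ^ t * n ^ t" by (rule card_sets_by_outside[OF S_sub])
  finally have "real (card {A\<in>rivals. card (A - S) = t}) \<le> real (n ^ t * n ^ t)"
    by (simp only: of_nat_le_iff)
  hence "real (card {A\<in>rivals. card (A - S) = t}) * inverse (real n ^ (5 * t))
      \<le> real n ^ t * real n ^ t * inverse (real n ^ (5 * t))"
    by (intro mult_right_mono) simp_all
  also have "\<dots> = inverse (real n ^ (3 * t))"
  proof -
    have cancel: "a * a * inverse (a * a * b) = inverse b" if "a \<noteq> 0" for a b :: real
      using that by (simp add: field_simps)
    have "real n ^ (5 * t) = real n ^ t * real n ^ t * real n ^ (3 * t)"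
      by (simp add: power_add[symmetric])
    thus ?thesis by (simp only:) (rule cancel, use n in simp)
  qed
  also have "\<dots> \<le> inverse (real n ^ 3)"
    using n assms by (intro le_imp_inverse_le power_increasing) auto
  finally show ?thesis .
qed

lemma not_unique_imp_rival_bipartite:
  "{X. {A. A \<subseteq> {..<n} \<and> card A = card S \<and> bipartite_on (planted_adj S H X) A} \<noteq> {S}}
     \<subseteq> (\<Union>A\<in>rivals. {X. bipartite_on (planted_adj S H X) A})"
proof
  fix X
  assume X: "X \<in> {X. {A. A \<subseteq> {..<n} \<and> card A = card S \<and> bipartite_on (planted_adj S H X) A} \<noteq> {S}}"
  have "S \<in> {A. A \<subseteq> {..<n} \<and> card A = card S \<and> bipartite_on (planted_adj S H X) A}"
    using S_sub bipartite_on_planted_S by auto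
  then obtain A where "A \<in> rivals" "bipartite_on (planted_adj S H X) A"
    using X unfolding rivals_def by blast
  thus "X \<in> (\<Union>A\<in>rivals. {X. bipartite_on (planted_adj S H X) A})" by blast
qed

lemma prob_not_unique_le:
  "measure_pmf.prob (planted_pmf n S p)
     {X. {A. A \<subseteq> {..<n} \<and> card A = card S \<and> bipartite_on (planted_adj S H X) A} \<noteq> {S}}
   \<le> 1 / real n"
proof -
  let ?M = "planted_pmf n S p"
  let ?bip = "\<lambda>A. {X. bipartite_on (planted_adj S H X) A}"
  have "measure_pmf.prob ?M
      {X. {A. A \<subseteq> {..<n} \<and> card A = card S \<and> bipartite_on (planted_adj S H X) A} \<noteq> {S}}
      \<le> measure_pmf.prob ?M (\<Union>A\<in>rivals. ?bip A)"
    using not_unique_imp_rival_bipartite by (intro measure_pmf.finite_measure_mono) auto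
  also have "\<dots> \<le> (\<Sum>A\<in>rivals. measure_pmf.prob ?M (?bip A))"
    by (intro measure_subadditive_finite finite_rivals) (auto simp: measure_pmf.emeasure_finite)
  also have "\<dots> \<le> (\<Sum>A\<in>rivals. inverse (real n ^ (5 * card (A - S))))"
    by (intro sum_mono prob_bipartite_other) (auto simp: rivals_def)
  also have "\<dots> = (\<Sum>t\<in>{1..n}. \<Sum>A\<in>{A\<in>rivals. card (A - S) = t}. inverse (real n ^ (5 * card (A - S))))"
    by (intro sum.group[symmetric] finite_rivals finite_atLeastAtMost image_subsetI card_outside_rival)
  also have "\<dots> = (\<Sum>t\<in>{1..n}. real (card {A\<in>rivals. card (A - S) = t}) * inverse (real n ^ (5 * t)))"
    by (intro sum.cong refl) simp
  also have "\<dots> \<le> (\<Sum>t\<in>{1..n}. inverse (real n ^ 3))"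
    using card_rivals_with_outside_le by (intro sum_mono) simp
  also have "\<dots> \<le> 1 / real n"
  proof -
    have "real n * real n * 1 \<le> real n * real n * real n" using n_ge_27 by (intro mult_left_mono) auto
    thus ?thesis using n_ge_27 by (simp add: power3_eq_cube field_simps)
  qed
  finally show ?thesis .
qed

end

lemma prob_unique_ge:
  assumes "S \<subseteq> {..<n}" "card S = k" "planted_graph S d H" "0 \<le> p" "p \<le> 1"
    "10 * ln (real n) / sqrt (real k) \<le> p" "27 \<le> n"
  shows "1 - 1 / real n \<le> measure_pmf.prob (planted_pmf n S p)
           {X. {A. A \<subseteq> {..<n} \<and> card A = k \<and> bipartite_on (planted_adj S H X) A} = {S}}"
proof -
  interpret planted_model S d H n p
    using assms finite_subset[OF assms(1)] by unfold_locales auto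
  let ?M = "planted_pmf n S p"
  let ?fail = "{X. {A. A \<subseteq> {..<n} \<and> card A = k \<and> bipartite_on (planted_adj S H X) A} \<noteq> {S}}"
  have "measure_pmf.prob ?M (space (measure_pmf ?M) - ?fail) = 1 - measure_pmf.prob ?M ?fail"
    by (rule measure_pmf.prob_compl) simp
  moreover have "space (measure_pmf ?M) - ?fail
      = {X. {A. A \<subseteq> {..<n} \<and> card A = k \<and> bipartite_on (planted_adj S H X) A} = {S}}"
    by auto
  ultimately show ?thesis using prob_not_unique_le assms(2) by simp
qed

theorem lemma3p8:
  fixes k d :: "nat \<Rightarrow> nat" and p :: "nat \<Rightarrow> real"
    and S :: "nat \<Rightarrow> nat set" and H :: "nat \<Rightarrow> nat \<Rightarrow> nat \<Rightarrow> bool"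
  assumes "eventually (\<lambda>n. S n \<subseteq> {..<n} \<and> card (S n) = k n \<and> planted_graph (S n) (d n) (H n)
             \<and> 0 \<le> p n \<and> p n \<le> 1 \<and> p n \<ge> 10 * ln (real n) / sqrt (real (k n))) sequentially"
  shows "(\<lambda>n. measure_pmf.prob (planted_pmf n (S n) (p n))
            {X. {A. A \<subseteq> {..<n} \<and> card A = k n \<and> bipartite_on (planted_adj (S n) (H n) X) A}
                = {S n}}) \<longlonglongrightarrow> 1"
proof (rule tendsto_sandwich)
  show "eventually (\<lambda>n. 1 - 1 / real n \<le> measure_pmf.prob (planted_pmf n (S n) (p n))
            {X. {A. A \<subseteq> {..<n} \<and> card A = k n \<and> bipartite_on (planted_adj (S n) (H n) X) A}
                = {S n}}) sequentially"
    using eventually_conj[OF assms eventually_ge_at_top[of 27]]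
    by eventually_elim (intro prob_unique_ge, auto)
  show "(\<lambda>n. 1 - 1 / real n) \<longlonglongrightarrow> 1"
    using tendsto_diff[OF tendsto_const lim_inverse_n', of 1] by simp
qed (auto intro: tendsto_const)

end
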